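(* Let $\mathcal R$ be a commutative ring with identity, $\mathcal M,\mathcal N$ modules over $\mathcal R$, $\Omega\subseteq\mathcal M_{\mathrm{nc}}$ a right admissible nc set, $f:\Omega\to\mathcal N_{\mathrm{nc}}$ a nc function, $n\in\mathbb N$ and $Y\in\Omega_n$. Then for each $N\in\mathbb N$ and every $X\in\Omega_n$, $$f(X)=\sum_{\ell=0}^N\Delta_R^\ell f(\underbrace{Y,\dots,Y}_{\ell+1})(\underbrace{X-Y,\dots,X-Y}_{\ell})+\Delta_R^{N+1}f(\underbrace{Y,\dots,Y}_{N+1},X)(\underbrace{X-Y,\dots,X-Y}_{N+1}).$$
   Context: $\mathcal M_{\mathrm{nc}}=\coprod_{n\ge1}\mathcal M^{n\times n}$; matrices over $\mathcal R$ act on matrices over $\mathcal M,\mathcal N$ by matrix multiplication; $X\oplus Y=\begin{bmatrix}X&0\\0&Y\end{bmatrix}$. A nc set is a subset $\Omega\subseteq\mathcal M_{\mathrm{nc}}$ closed under direct sums, $\Omega_n=\Omega\cap\mathcal M^{n\times n}$. A nc function $f:\Omega\to\mathcal N_{\mathrm{nc}}$ satisfies $f(\Omega_n)\subseteq\mathcal N^{n\times n}$, $f(X\oplus Y)=f(X)\oplus f(Y)$, and $f(SXS^{-1})=Sf(X)S^{-1}$ whenever $S\in\mathcal R^{n\times n}$ is invertible and $X,SXS^{-1}\in\Omega_n$. $\Omega$ is right admissible if for all $X\in\Omega_n$, $Y\in\Omega_m$, $Z\in\mathcal M^{n\times m}$ there is an invertible $r\in\mathcal R$ with $\begin{bmatrix}X&rZ\\0&Y\end{bmatrix}\in\Omega_{n+m}$.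 Higher order difference-differential operators: let $\tilde\Omega=\{SXS^{-1}: X\in\Omega_n,\ S\in\mathcal R^{n\times n}\text{ invertible},\ n\in\mathbb N\}$; $f$ extends uniquely to a nc function $\tilde f$ on $\tilde\Omega$ by $\tilde f(SXS^{-1})=Sf(X)S^{-1}$. If $\Omega$ is right admissible, then for $X^j\in\Omega_{n_j}$ ($j=0,\dots,\ell$) and $Z^j\in\mathcal M^{n_{j-1}\times n_j}$ ($j=1,\dots,\ell$), the block upper bidiagonal matrix $B$ with diagonal blocks $X^0,\dots,X^\ell$, blocks $Z^1,\dots,Z^\ell$ directly above the diagonal and zeros elsewhere lies in $\tilde\Omega$, and $\Delta_R^\ell f(X^0,\dots,X^\ell)(Z^1,\dots,Z^\ell)\in\mathcal N^{n_0\times n_\ell}$ denotes the $(1,\ell+1)$ block entry of $\tilde f(B)$; it is $\mathcal R$-multilinear in $(Z^1,\dots,Z^\ell)$, and $\Delta_R^0f=f$. *)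

theory Defs
  imports Main "HOL.Modules" "HOL-Library.Function_Algebras"
begin

text \<open>Matrices over a type 'a are encoded as functions nat => nat => 'a (0-based indices);
  a matrix of size p x q is one that vanishes outside [0,p) x [0,q).  Pointwise
  addition/subtraction/sums of matrices come from Function_Algebras.  An element
  X of Omega_n is a pair (n, X) in Omega.  Modules over R are given by the
  library locale module with scalar multiplications scM, scN.\<close>

type_synonym 'a mat = "nat \<Rightarrow> nat \<Rightarrow> 'a"

definition mat_on :: "nat \<Rightarrow> nat \<Rightarrow> ('a::zero) mat \<Rightarrow> bool" where
  "mat_on p q X \<longleftrightarrow> (\<forall>i j. (p \<le> i \<or> q \<le> j) \<longrightarrow> X i j = 0)"

definition rmatmul :: "nat \<Rightarrow> ('r::comm_ring_1) mat \<Rightarrow> 'r mat \<Rightarrow> 'r mat" where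
  "rmatmul n S T = (\<lambda>i j. \<Sum>k<n. S i k * T k j)"

definition idm :: "nat \<Rightarrow> ('r::comm_ring_1) mat" where
  "idm n = (\<lambda>i j. if i = j \<and> i < n then 1 else 0)"

definition inv_pair :: "nat \<Rightarrow> ('r::comm_ring_1) mat \<Rightarrow> 'r mat \<Rightarrow> bool" where
  "inv_pair n S T \<longleftrightarrow> mat_on n n S \<and> mat_on n n T \<and>
     rmatmul n S T = idm n \<and> rmatmul n T S = idm n"

definition lact :: "('r::comm_ring_1 \<Rightarrow> 'm::ab_group_add \<Rightarrow> 'm) \<Rightarrow> nat \<Rightarrow> 'r mat \<Rightarrow> 'm mat \<Rightarrow> 'm mat" where
  "lact sc n S X = (\<lambda>i j. \<Sum>k<n. sc (S i k) (X k j))"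

definition ract :: "('r::comm_ring_1 \<Rightarrow> 'm::ab_group_add \<Rightarrow> 'm) \<Rightarrow> nat \<Rightarrow> 'm mat \<Rightarrow> 'r mat \<Rightarrow> 'm mat" where
  "ract sc n X T = (\<lambda>i j. \<Sum>k<n. sc (T k j) (X i k))"

definition sim :: "('r::comm_ring_1 \<Rightarrow> 'm::ab_group_add \<Rightarrow> 'm) \<Rightarrow> nat \<Rightarrow> 'r mat \<Rightarrow> 'm mat \<Rightarrow> 'r mat \<Rightarrow> 'm mat" where
  "sim sc n S X T = ract sc n (lact sc n S X) T"

definition smat :: "('r \<Rightarrow> 'm \<Rightarrow> 'm) \<Rightarrow> 'r \<Rightarrow> 'm mat \<Rightarrow> 'm mat" where
  "smat sc r Z = (\<lambda>i j. sc r (Z i j))"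

definition dsum :: "nat \<Rightarrow> ('a::zero) mat \<Rightarrow> nat \<Rightarrow> 'a mat \<Rightarrow> 'a mat" where
  "dsum n X m Y = (\<lambda>i j. if i < n \<and> j < n then X i j
      else if n \<le> i \<and> i < n + m \<and> n \<le> j \<and> j < n + m then Y (i - n) (j - n) else 0)"

definition blockm :: "nat \<Rightarrow> nat \<Rightarrow> ('a::zero) mat \<Rightarrow> 'a mat \<Rightarrow> 'a mat \<Rightarrow> 'a mat" where
  "blockm n m X Z Y = (\<lambda>i j. if i < n \<and> j < n then X i j
      else if i < n \<and> n \<le> j \<and> j < n + m then Z i (j - n)
      else if n \<le> i \<and> i < n + m \<and> n \<le> j \<and> j < n + m then Y (i - n) (j - n) else 0)"

definition nc_set :: "(nat \<times> ('m::zero) mat) set \<Rightarrow> bool" where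
  "nc_set \<Omega> \<longleftrightarrow> (\<forall>(n, X) \<in> \<Omega>. 0 < n \<and> mat_on n n X) \<and>
     (\<forall>(n, X) \<in> \<Omega>. \<forall>(m, Y) \<in> \<Omega>. (n + m, dsum n X m Y) \<in> \<Omega>)"

definition right_admissible ::
  "('r::comm_ring_1 \<Rightarrow> 'm::ab_group_add \<Rightarrow> 'm) \<Rightarrow> (nat \<times> 'm mat) set \<Rightarrow> bool" where
  "right_admissible scM \<Omega> \<longleftrightarrow>
     (\<forall>(n, X) \<in> \<Omega>. \<forall>(m, Y) \<in> \<Omega>. \<forall>Z. mat_on n m Z \<longrightarrow>
        (\<exists>r s. r * s = 1 \<and> (n + m, blockm n m X (smat scM r Z) Y) \<in> \<Omega>))"

definition nc_fun ::
  "('r::comm_ring_1 \<Rightarrow> 'm::ab_group_add \<Rightarrow> 'm) \<Rightarrow> ('r \<Rightarrow> 'n::ab_group_add \<Rightarrow> 'n) \<Rightarrow>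
   (nat \<times> 'm mat) set \<Rightarrow> (nat \<Rightarrow> 'm mat \<Rightarrow> 'n mat) \<Rightarrow> bool" where
  "nc_fun scM scN \<Omega> f \<longleftrightarrow>
     (\<forall>(n, X) \<in> \<Omega>. mat_on n n (f n X)) \<and>
     (\<forall>(n, X) \<in> \<Omega>. \<forall>(m, Y) \<in> \<Omega>. f (n + m) (dsum n X m Y) = dsum n (f n X) m (f m Y)) \<and>
     (\<forall>n X S T. (n, X) \<in> \<Omega> \<longrightarrow> inv_pair n S T \<longrightarrow> (n, sim scM n S X T) \<in> \<Omega> \<longrightarrow>
        f n (sim scM n S X T) = sim scN n S (f n X) T)"

text \<open>The extension f~ to Omega~ = {S X S^{-1}}: f~(S X S^{-1}) = S f(X) S^{-1}.\<close>
definition nc_ext ::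
  "('r::comm_ring_1 \<Rightarrow> 'm::ab_group_add \<Rightarrow> 'm) \<Rightarrow> ('r \<Rightarrow> 'n::ab_group_add \<Rightarrow> 'n) \<Rightarrow>
   (nat \<times> 'm mat) set \<Rightarrow> (nat \<Rightarrow> 'm mat \<Rightarrow> 'n mat) \<Rightarrow> nat \<Rightarrow> 'm mat \<Rightarrow> 'n mat" where
  "nc_ext scM scN \<Omega> f n B = (SOME W. \<exists>X S T. (n, X) \<in> \<Omega> \<and> inv_pair n S T \<and>
      B = sim scM n S X T \<and> W = sim scN n S (f n X) T)"

definition boff :: "nat list \<Rightarrow> nat \<Rightarrow> nat" where
  "boff ns k = sum_list (take k ns)"

definition bidx :: "nat list \<Rightarrow> nat \<Rightarrow> nat" where
  "bidx ns i = (LEAST p. i < boff ns (Suc p))"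

text \<open>Block upper bidiagonal matrix with diagonal blocks Xs!0..Xs!l (sizes ns) and
  superdiagonal blocks Zs!0..Zs!(l-1) (= Z^1..Z^l).\<close>
definition bidiag :: "nat list \<Rightarrow> ('a::zero) mat list \<Rightarrow> 'a mat list \<Rightarrow> 'a mat" where
  "bidiag ns Xs Zs = (\<lambda>i j. if i < sum_list ns \<and> j < sum_list ns then
      (let p = bidx ns i; q = bidx ns j in
        if p = q then (Xs ! p) (i - boff ns p) (j - boff ns q)
        else if q = Suc p then (Zs ! p) (i - boff ns p) (j - boff ns q)
        else 0)
     else 0)"

text \<open>Delta_R^l f(X^0,...,X^l)(Z^1,...,Z^l): the (1,l+1) block of f~(bidiagonal matrix),
  where l = length ns - 1.\<close>
definition Delta ::
  "('r::comm_ring_1 \<Rightarrow> 'm::ab_group_add \<Rightarrow> 'm) \<Rightarrow> ('r \<Rightarrow> 'n::ab_group_add \<Rightarrow> 'n) \<Rightarrow>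
   (nat \<times> 'm mat) set \<Rightarrow> (nat \<Rightarrow> 'm mat \<Rightarrow> 'n mat) \<Rightarrow>
   nat list \<Rightarrow> 'm mat list \<Rightarrow> 'm mat list \<Rightarrow> 'n mat" where
  "Delta scM scN \<Omega> f ns Xs Zs =
     (let l = length ns - 1;
          F = nc_ext scM scN \<Omega> f (sum_list ns) (bidiag ns Xs Zs)
      in (\<lambda>i j. if i < ns ! 0 \<and> j < ns ! l then F (i + boff ns 0) (j + boff ns l) else 0))"

end

theory Submission
  imports Defs
begin

text \<open>The formula telescopes. Let \<open>A\<^sub>l\<close> be the block bidiagonal matrix with \<open>l + 1\<close> diagonal
  blocks \<open>Y\<close> and superdiagonal blocks \<open>X - Y\<close>, and \<open>B\<^sub>l\<close> the same matrix with its last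
  diagonal block replaced by \<open>X\<close>. The corners (block \<open>(1, l + 1)\<close>) of \<open>f(A\<^sub>l)\<close> and of \<open>f(B\<^sub>l\<^sub>+\<^sub>1)\<close>
  are the \<open>l\<close>-th term and the \<open>l\<close>-th remainder, and \<open>B\<^sub>0 = X\<close>. The extension of \<open>f\<close> to the
  similarity closure respects intertwinings: \<open>A S = S B\<close> implies \<open>f(A) S = S f(B)\<close>, because
  conjugating \<open>A \<oplus> B\<close> by the shear \<open>[I S; 0 I]\<close> fixes it. Applied to
  \<open>B\<^sub>N\<^sub>+\<^sub>1 [I; 0] = [I; 0] A\<^sub>N\<close> and \<open>B\<^sub>N\<^sub>+\<^sub>1 [I; E] = [I; E] B\<^sub>N\<close> with the block row \<open>E = [0 \<dots> 0 I]\<close>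
  and read off in the first block row, this shows that the corner of \<open>f(B\<^sub>N)\<close> is the corner
  of \<open>f(A\<^sub>N)\<close> plus the corner of \<open>f(B\<^sub>N\<^sub>+\<^sub>1)\<close>. Right admissibility is what puts the
  bidiagonal matrices into the similarity closure.\<close>

section \<open>Matrix actions\<close>

lemma sum_lessThan_add: "(\<Sum>k<m + n. g k) = (\<Sum>k<m. g k) + (\<Sum>k<n. g (m + k :: nat))"
  by (induct n) (auto simp: add_ac)

lemma sum_lessThan_if_eq:
  "(\<Sum>k<m. if k = c \<and> P then g k else 0) = (if c < (m::nat) \<and> P then g c else 0)"
  by (cases P) (simp_all add: sum.delta')

context module
begin

lemma scale_if_zero: "(if P then a else 0) *s x = (if P then a *s x else 0)"
  by simp

lemma lact_mat_on: "mat_on p k S \<Longrightarrow> mat_on k q X \<Longrightarrow> mat_on p q (lact scale k S X)"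
  by (auto simp: mat_on_def lact_def)

lemma ract_mat_on: "mat_on p k X \<Longrightarrow> mat_on k q T \<Longrightarrow> mat_on p q (ract scale k X T)"
  by (auto simp: mat_on_def ract_def)

lemma sim_mat_on: "mat_on n n S \<Longrightarrow> mat_on n n T \<Longrightarrow> mat_on n n (sim scale n S X T)"
  by (auto simp: mat_on_def sim_def ract_def lact_def)

lemma lact_zero_left [simp]: "lact scale n 0 X = 0"
  by (simp add: fun_eq_iff lact_def)

lemma lact_zero_right [simp]: "lact scale n S 0 = 0"
  by (simp add: fun_eq_iff lact_def)

lemma ract_zero_left [simp]: "ract scale n 0 T = 0"
  by (simp add: fun_eq_iff ract_def)

lemma ract_zero_right [simp]: "ract scale n X 0 = 0"
  by (simp add: fun_eq_iff ract_def)

lemma lact_uminus_left: "lact scale n (- S) X = - lact scale n S X"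
  by (simp add: fun_eq_iff lact_def sum_negf)

lemma ract_uminus_left: "ract scale n (- X) T = - ract scale n X T"
  by (simp add: fun_eq_iff ract_def sum_negf)

lemma lact_add_left: "lact scale n (S1 + S2) X = lact scale n S1 X + lact scale n S2 X"
  by (simp add: fun_eq_iff lact_def scale_left_distrib sum.distrib)

lemma ract_add_right: "ract scale n X (T1 + T2) = ract scale n X T1 + ract scale n X T2"
  by (simp add: fun_eq_iff ract_def scale_left_distrib sum.distrib)

lemma smat_smat: "smat scale r (smat scale s X) = smat scale (r * s) X"
  by (simp add: fun_eq_iff smat_def)

lemma smat_one: "smat scale 1 X = X"
  by (simp add: fun_eq_iff smat_def)

lemma lact_smat: "lact scale n S (smat scale r X) = smat scale r (lact scale n S X)"
  by (simp add: fun_eq_iff lact_def smat_def scale_sum_right mult.commute)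

lemma lact_rmatmul: "lact scale n (rmatmul n S T) X = lact scale n S (lact scale n T X)"
  unfolding fun_eq_iff lact_def rmatmul_def
  by (simp add: scale_sum_left scale_sum_right) (intro allI sum.swap)

lemma ract_rmatmul: "ract scale n (ract scale n X S) T = ract scale n X (rmatmul n S T)"
  unfolding fun_eq_iff ract_def rmatmul_def
  by (simp add: scale_sum_left scale_sum_right mult.commute) (intro allI sum.swap)

lemma lact_ract_assoc: "lact scale n S (ract scale m X T) = ract scale m (lact scale n S X) T"
  unfolding fun_eq_iff ract_def lact_def
  by (simp add: scale_sum_right) (intro allI, subst sum.swap, simp add: mult.commute)

lemma sim_sim:
  "sim scale n P (sim scale n S X T) Q = sim scale n (rmatmul n P S) X (rmatmul n T Q)"
  by (simp add: sim_def lact_ract_assoc lact_rmatmul ract_rmatmul)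

lemma lact_idm_apply: "lact scale q (idm q) G i j = (if i < q then G i j else 0)"
proof -
  have "lact scale q (idm q) G i j = (\<Sum>k<q. if k = i \<and> i < q then G k j else 0)"
    unfolding lact_def idm_def scale_if_zero by (rule sum.cong) auto
  then show ?thesis by (simp add: sum_lessThan_if_eq)
qed

lemma ract_idm_apply:
  assumes "q \<le> p" shows "ract scale p G (idm q) i j = (if j < q then G i j else 0)"
proof -
  have "ract scale p G (idm q) i j = (\<Sum>k<p. if k = j \<and> j < q then G i k else 0)"
    unfolding ract_def idm_def scale_if_zero by (rule sum.cong) auto
  then show ?thesis using assms by (simp add: sum_lessThan_if_eq)
qed

lemma lact_idm: "mat_on n q X \<Longrightarrow> lact scale n (idm n) X = X"
  by (auto simp: fun_eq_iff lact_idm_apply mat_on_def)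

lemma ract_idm: "mat_on p n X \<Longrightarrow> ract scale n X (idm n) = X"
  by (auto simp: fun_eq_iff ract_idm_apply mat_on_def)

lemma sim_idm: "mat_on n n X \<Longrightarrow> sim scale n (idm n) X (idm n) = X"
  by (simp add: sim_def lact_idm ract_idm)

lemma lact_scalar_idm: "mat_on n q X \<Longrightarrow> lact scale n (smat (*) r (idm n)) X = smat scale r X"
proof -
  assume X: "mat_on n q X"
  have "lact scale n (smat (*) r (idm n)) X = smat scale r (lact scale n (idm n) X)"
    by (simp add: fun_eq_iff lact_def smat_def idm_def scale_sum_right)
  then show ?thesis using lact_idm[OF X] by simp
qed

lemma ract_scalar_idm: "mat_on p n X \<Longrightarrow> ract scale n X (smat (*) r (idm n)) = smat scale r X"
proof -
  assume X: "mat_on p n X"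
  have "ract scale n X (smat (*) r (idm n)) = smat scale r (ract scale n X (idm n))"
    by (simp add: fun_eq_iff ract_def smat_def idm_def scale_sum_right)
  then show ?thesis using ract_idm[OF X] by simp
qed

lemma lact_blockm:
  "lact scale (m + n) (blockm m n S1 S2 S3) (blockm m n X1 X2 X3) =
   blockm m n (lact scale m S1 X1) (lact scale m S1 X2 + lact scale n S2 X3) (lact scale n S3 X3)"
  unfolding fun_eq_iff lact_def sum_lessThan_add by (auto simp: blockm_def)

lemma ract_blockm:
  "ract scale (m + n) (blockm m n X1 X2 X3) (blockm m n T1 T2 T3) =
   blockm m n (ract scale m X1 T1) (ract scale m X1 T2 + ract scale n X2 T3) (ract scale n X3 T3)"
  unfolding fun_eq_iff ract_def sum_lessThan_add by (auto simp: blockm_def)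

lemma sim_blockm_diag:
  "sim scale (p + q) (blockm p q S1 0 S2) (blockm p q X1 0 X2) (blockm p q T1 0 T2) =
   blockm p q (sim scale p S1 X1 T1) 0 (sim scale q S2 X2 T2)"
  by (simp add: sim_def lact_blockm ract_blockm)

lemma sim_shear:
  assumes A: "mat_on p p A" and B: "mat_on q q B" and S: "mat_on p q S"
  shows "sim scale (p + q) (blockm p q (idm p) (- S) (idm q)) (blockm p q A 0 B)
           (blockm p q (idm p) S (idm q))
     = blockm p q A (ract scale p A S - lact scale q S B) B"
proof -
  have SB: "mat_on p q (lact scale q S B)" using S B by (rule lact_mat_on)
  show ?thesis
    unfolding sim_def lact_blockm ract_blockm
    by (simp add: lact_idm[OF A] lact_idm[OF B] ract_idm[OF A] ract_idm[OF B] ract_idm[OF SB]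
        lact_uminus_left ract_uminus_left)
qed

lemma sim_blockm_rescale:
  assumes X: "mat_on n n X" and Z: "mat_on m n Z" and ST: "rmatmul m S T = idm m" and rs: "r * s = 1"
  shows "sim scale (m + n) (blockm m n S 0 (smat (*) r (idm n)))
           (blockm m n W (smat scale r (lact scale m T Z)) X) (blockm m n T 0 (smat (*) s (idm n)))
     = blockm m n (sim scale m S W T) Z X"
proof -
  have rZ: "mat_on m n (smat scale r Z)" and rX: "mat_on n n (smat scale r X)"
    using Z X by (simp_all add: mat_on_def smat_def)
  have STZ: "lact scale m S (lact scale m T Z) = Z"
    using lact_rmatmul[of m S T Z] ST lact_idm[OF Z] by simp
  show ?thesis
    by (simp add: sim_def lact_blockm ract_blockm lact_scalar_idm[OF X] lact_smat STZ
        ract_scalar_idm[OF rZ] ract_scalar_idm[OF rX] smat_smat mult.commute[of s r] rs smat_one)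
qed

end


lemma module_times: "module ((*) :: 'a::comm_ring_1 \<Rightarrow> 'a \<Rightarrow> 'a)"
  by unfold_locales (simp_all add: algebra_simps)

lemma rmatmul_eq_lact: "rmatmul n S T = lact (*) n S T"
  by (simp add: rmatmul_def lact_def fun_eq_iff)

lemma rmatmul_assoc: "rmatmul n (rmatmul n P S) T = rmatmul n P (rmatmul n S T)"
  using module.lact_rmatmul[OF module_times, of n P S T] by (simp add: rmatmul_eq_lact)

lemma idm_mat_on: "mat_on n n (idm n)"
  by (simp add: mat_on_def idm_def)

lemma rmatmul_mat_on: "mat_on p k S \<Longrightarrow> mat_on k q T \<Longrightarrow> mat_on p q (rmatmul k S T)"
  by (simp add: rmatmul_eq_lact module.lact_mat_on[OF module_times])

lemma rmatmul_idm_left: "mat_on n q S \<Longrightarrow> rmatmul n (idm n) S = S"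
  by (simp add: rmatmul_eq_lact module.lact_idm[OF module_times])

lemma rmatmul_idm_right: "mat_on p n S \<Longrightarrow> rmatmul n S (idm n) = S"
  using module.ract_idm[OF module_times, of p n S] by (simp add: rmatmul_def ract_def mult.commute)

lemma inv_pair_idm: "inv_pair n (idm n) (idm n)"
  by (simp add: inv_pair_def idm_mat_on rmatmul_idm_left[OF idm_mat_on])

lemma inv_pair_sym: "inv_pair n S T \<Longrightarrow> inv_pair n T S"
  by (simp add: inv_pair_def)

lemma inv_pair_rmatmul:
  assumes PQ: "inv_pair n P Q" and ST: "inv_pair n S T"
  shows "inv_pair n (rmatmul n P S) (rmatmul n T Q)"
proof -
  have m: "mat_on n n P" "mat_on n n Q" "mat_on n n S" "mat_on n n T"
    and e: "rmatmul n P Q = idm n" "rmatmul n Q P = idm n" "rmatmul n S T = idm n"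
      "rmatmul n T S = idm n"
    using PQ ST by (auto simp: inv_pair_def)
  have "rmatmul n (rmatmul n P S) (rmatmul n T Q) = rmatmul n P (rmatmul n (rmatmul n S T) Q)"
    by (simp add: rmatmul_assoc)
  also have "\<dots> = idm n"
    by (simp add: e rmatmul_idm_left[OF m(2)])
  finally have 1: "rmatmul n (rmatmul n P S) (rmatmul n T Q) = idm n" .
  have "rmatmul n (rmatmul n T Q) (rmatmul n P S) = rmatmul n T (rmatmul n (rmatmul n Q P) S)"
    by (simp add: rmatmul_assoc)
  also have "\<dots> = idm n"
    by (simp add: e rmatmul_idm_left[OF m(3)])
  finally show ?thesis using 1 m by (simp add: inv_pair_def rmatmul_mat_on)
qed

lemma blockm_mat_on: "mat_on (m + n) (m + n) (blockm m n A B C)"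
  by (simp add: mat_on_def blockm_def)

lemma dsum_eq_blockm: "dsum m X n Y = blockm m n X 0 Y"
  by (simp add: fun_eq_iff dsum_def blockm_def)

lemma idm_add_eq_blockm: "idm (m + n) = blockm m n (idm m) 0 (idm n)"
  by (auto simp: fun_eq_iff idm_def blockm_def)

lemma inv_pair_blockm_diag:
  "inv_pair p S1 T1 \<Longrightarrow> inv_pair q S2 T2 \<Longrightarrow>
   inv_pair (p + q) (blockm p q S1 0 S2) (blockm p q T1 0 T2)"
  unfolding inv_pair_def rmatmul_eq_lact
  by (simp add: blockm_mat_on module.lact_blockm[OF module_times] idm_add_eq_blockm[symmetric]
      module.lact_zero_left[OF module_times] module.lact_zero_right[OF module_times])

lemma inv_pair_shear:
  assumes S: "mat_on p q S"
  shows "inv_pair (p + q) (blockm p q (idm p) (- S) (idm q)) (blockm p q (idm p) S (idm q))"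
proof -
  have S': "mat_on p q (- S)" using S by (simp add: mat_on_def)
  have idm_left: "lact (*) p (idm p) X = X" and idm_right: "lact (*) q X (idm q) = X"
    if "mat_on p q X" for X :: "'a mat"
    using rmatmul_idm_left[OF that] rmatmul_idm_right[OF that] by (simp_all add: rmatmul_eq_lact)
  show ?thesis
    unfolding inv_pair_def rmatmul_eq_lact
    by (simp add: blockm_mat_on module.lact_blockm[OF module_times] idm_add_eq_blockm[symmetric]
        module.lact_idm[OF module_times idm_mat_on] idm_left[OF S] idm_right[OF S]
        idm_left[OF S'] idm_right[OF S'])
qed

lemma inv_pair_scalar_idm: "r * s = 1 \<Longrightarrow> inv_pair n (smat (*) r (idm n)) (smat (*) s (idm n))"
proof -
  assume rs: "r * s = 1"
  have m: "mat_on n n (smat (*) c (idm n))" for c :: 'a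
    by (simp add: smat_def idm_def mat_on_def)
  show ?thesis
    unfolding inv_pair_def rmatmul_eq_lact
    using rs m by (simp add: module.lact_scalar_idm[OF module_times m] module.smat_smat[OF module_times]
        module.smat_one[OF module_times] mult.commute[of s r] idm_mat_on)
qed

lemma blockm_upper_eq:
  assumes e: "blockm m n X Z Y = blockm m n X' Z' Y'" and Z: "mat_on m n Z" "mat_on m n Z'"
  shows "Z = Z'"
proof (intro ext)
  fix i j
  show "Z i j = Z' i j"
  proof (cases "i < m \<and> j < n")
    case True
    have "blockm m n X Z Y i (m + j) = blockm m n X' Z' Y' i (m + j)" using e by simp
    then show ?thesis using True by (simp add: blockm_def)
  next
    case False
    then show ?thesis using Z by (auto simp: mat_on_def)
  qed
qed


section \<open>The extension of a nc function to the similarity closure\<close>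

definition nc_sim_closure ::
  "('r::comm_ring_1 \<Rightarrow> 'm::ab_group_add \<Rightarrow> 'm) \<Rightarrow> (nat \<times> 'm mat) set \<Rightarrow> nat \<Rightarrow> 'm mat \<Rightarrow> bool"
where
  "nc_sim_closure scM \<Omega> n B \<longleftrightarrow> (\<exists>X S T. (n, X) \<in> \<Omega> \<and> inv_pair n S T \<and> B = sim scM n S X T)"

locale nc_function =
  fixes scM :: "'r::comm_ring_1 \<Rightarrow> 'm::ab_group_add \<Rightarrow> 'm"
    and scN :: "'r \<Rightarrow> 'n::ab_group_add \<Rightarrow> 'n"
    and \<Omega> :: "(nat \<times> 'm mat) set"
    and f :: "nat \<Rightarrow> 'm mat \<Rightarrow> 'n mat"
  assumes module_M: "module scM" and module_N: "module scN"
    and nc_set: "nc_set \<Omega>" and right_admissible: "right_admissible scM \<Omega>"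
    and nc_fun: "nc_fun scM scN \<Omega> f"
begin

abbreviation "\<Omega>t \<equiv> nc_sim_closure scM \<Omega>"
abbreviation "ft \<equiv> nc_ext scM scN \<Omega> f"

lemma Omega_dim_pos: "(n, X) \<in> \<Omega> \<Longrightarrow> 0 < n"
  using nc_set unfolding nc_set_def by blast

lemma Omega_mat_on: "(n, X) \<in> \<Omega> \<Longrightarrow> mat_on n n X"
  using nc_set unfolding nc_set_def by blast

lemma Omega_dsum: "(n, X) \<in> \<Omega> \<Longrightarrow> (m, Y) \<in> \<Omega> \<Longrightarrow> (n + m, dsum n X m Y) \<in> \<Omega>"
  using nc_set unfolding nc_set_def by blast

lemma Omega_blockm_admissible:
  "(n, X) \<in> \<Omega> \<Longrightarrow> (m, Y) \<in> \<Omega> \<Longrightarrow> mat_on n m Z \<Longrightarrow>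
   \<exists>r s. r * s = 1 \<and> (n + m, blockm n m X (smat scM r Z) Y) \<in> \<Omega>"
  using right_admissible unfolding right_admissible_def by blast

lemma f_mat_on: "(n, X) \<in> \<Omega> \<Longrightarrow> mat_on n n (f n X)"
  using nc_fun unfolding nc_fun_def by blast

lemma f_dsum:
  "(n, X) \<in> \<Omega> \<Longrightarrow> (m, Y) \<in> \<Omega> \<Longrightarrow> f (n + m) (dsum n X m Y) = dsum n (f n X) m (f m Y)"
  using nc_fun unfolding nc_fun_def by blast

lemma f_sim:
  "(n, X) \<in> \<Omega> \<Longrightarrow> inv_pair n S T \<Longrightarrow> (n, sim scM n S X T) \<in> \<Omega> \<Longrightarrow>
   f n (sim scM n S X T) = sim scN n S (f n X) T"
  using nc_fun unfolding nc_fun_def by blast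

text \<open>The choice in \<open>nc_ext\<close> is harmless: two representations \<open>S X T = S' X' T'\<close> are
  related by the similarity \<open>X' = (T' S) X (T S')\<close>, which \<open>f\<close> respects.\<close>

lemma nc_ext_sim:
  assumes X: "(m, X) \<in> \<Omega>" and ST: "inv_pair m S T"
  shows "ft m (sim scM m S X T) = sim scN m S (f m X) T"
proof -
  define B where "B = sim scM m S X T"
  have "\<exists>W X' S' T'. (m, X') \<in> \<Omega> \<and> inv_pair m S' T' \<and> B = sim scM m S' X' T' \<and>
      W = sim scN m S' (f m X') T'"
    using X ST B_def by blast
  from someI_ex[OF this] obtain X' S' T' where X': "(m, X') \<in> \<Omega>" and ST': "inv_pair m S' T'"
    and B': "B = sim scM m S' X' T'" and ftB: "ft m B = sim scN m S' (f m X') T'"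
    unfolding nc_ext_def by blast
  have mS: "mat_on m m S" "mat_on m m T"
    and eS: "rmatmul m S T = idm m" "rmatmul m T' S' = idm m" "rmatmul m S' T' = idm m"
    using ST ST' by (auto simp: inv_pair_def)
  have "X' = sim scM m (idm m) X' (idm m)"
    using module.sim_idm[OF module_M Omega_mat_on[OF X']] by simp
  also have "\<dots> = sim scM m T' B S'"
    using B' eS module.sim_sim[OF module_M] by simp
  also have "\<dots> = sim scM m (rmatmul m T' S) X (rmatmul m T S')"
    using B_def module.sim_sim[OF module_M] by simp
  finally have X'_eq: "X' = sim scM m (rmatmul m T' S) X (rmatmul m T S')" .
  have "inv_pair m (rmatmul m T' S) (rmatmul m T S')"
    using inv_pair_rmatmul[OF inv_pair_sym[OF ST'] ST] .
  then have "f m X' = sim scN m (rmatmul m T' S) (f m X) (rmatmul m T S')"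
    using f_sim[OF X] X' X'_eq by simp
  then have "ft m B = sim scN m (rmatmul m S' (rmatmul m T' S)) (f m X) (rmatmul m (rmatmul m T S') T')"
    using ftB module.sim_sim[OF module_N] by simp
  also have "\<dots> = sim scN m S (f m X) T"
    by (simp add: rmatmul_assoc eS rmatmul_idm_right[OF mS(2)] flip: rmatmul_assoc[of m S' T' S])
      (simp add: rmatmul_idm_left[OF mS(1)])
  finally show ?thesis using B_def by simp
qed

lemma nc_sim_closure_mat_on: "\<Omega>t n B \<Longrightarrow> mat_on n n B"
  unfolding nc_sim_closure_def inv_pair_def
  using module.sim_mat_on[OF module_M] by blast

lemma nc_ext_mat_on: "\<Omega>t n B \<Longrightarrow> mat_on n n (ft n B)"
proof -
  assume "\<Omega>t n B"
  then obtain X S T where X: "(n, X) \<in> \<Omega>" and ST: "inv_pair n S T" and "B = sim scM n S X T"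
    unfolding nc_sim_closure_def by blast
  then show ?thesis
    using nc_ext_sim[OF X ST] module.sim_mat_on[OF module_N] by (simp add: inv_pair_def)
qed

lemma sim_idm_Omega: "(n, X) \<in> \<Omega> \<Longrightarrow> sim scM n (idm n) X (idm n) = X"
  using module.sim_idm[OF module_M Omega_mat_on] .

lemma nc_sim_closure_Omega: "(n, X) \<in> \<Omega> \<Longrightarrow> \<Omega>t n X"
  unfolding nc_sim_closure_def using sim_idm_Omega inv_pair_idm by metis

lemma nc_ext_Omega: "(n, X) \<in> \<Omega> \<Longrightarrow> ft n X = f n X"
  using nc_ext_sim[OF _ inv_pair_idm, of n X] sim_idm_Omega module.sim_idm[OF module_N f_mat_on]
  by simp

lemma nc_ext_sim_closure:
  assumes B: "\<Omega>t n B" and PQ: "inv_pair n P Q"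
  shows "ft n (sim scM n P B Q) = sim scN n P (ft n B) Q"
proof -
  obtain X S T where X: "(n, X) \<in> \<Omega>" and ST: "inv_pair n S T" and B_eq: "B = sim scM n S X T"
    using B unfolding nc_sim_closure_def by blast
  have "sim scM n P B Q = sim scM n (rmatmul n P S) X (rmatmul n T Q)"
    using B_eq module.sim_sim[OF module_M] by simp
  then show ?thesis
    using B_eq nc_ext_sim[OF X ST] nc_ext_sim[OF X inv_pair_rmatmul[OF PQ ST]]
      module.sim_sim[OF module_N] by simp
qed

lemma nc_sim_closure_dsum:
  assumes A: "\<Omega>t p A" and B: "\<Omega>t q B"
  shows "\<Omega>t (p + q) (dsum p A q B)"
    and "ft (p + q) (dsum p A q B) = dsum p (ft p A) q (ft q B)"
proof -
  obtain X1 S1 T1 where X1: "(p, X1) \<in> \<Omega>" and ST1: "inv_pair p S1 T1"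
    and A_eq: "A = sim scM p S1 X1 T1"
    using A unfolding nc_sim_closure_def by blast
  obtain X2 S2 T2 where X2: "(q, X2) \<in> \<Omega>" and ST2: "inv_pair q S2 T2"
    and B_eq: "B = sim scM q S2 X2 T2"
    using B unfolding nc_sim_closure_def by blast
  have ST: "inv_pair (p + q) (blockm p q S1 0 S2) (blockm p q T1 0 T2)"
    using inv_pair_blockm_diag[OF ST1 ST2] .
  have X: "(p + q, blockm p q X1 0 X2) \<in> \<Omega>"
    using Omega_dsum[OF X1 X2] by (simp add: dsum_eq_blockm)
  have AB: "dsum p A q B = sim scM (p + q) (blockm p q S1 0 S2) (blockm p q X1 0 X2) (blockm p q T1 0 T2)"
    using A_eq B_eq module.sim_blockm_diag[OF module_M] by (simp add: dsum_eq_blockm)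
  then show "\<Omega>t (p + q) (dsum p A q B)"
    using X ST unfolding nc_sim_closure_def by blast
  have "ft (p + q) (dsum p A q B) =
      sim scN (p + q) (blockm p q S1 0 S2) (blockm p q (f p X1) 0 (f q X2)) (blockm p q T1 0 T2)"
    using nc_ext_sim[OF X ST] AB f_dsum[OF X1 X2] by (simp add: dsum_eq_blockm)
  also have "\<dots> = dsum p (ft p A) q (ft q B)"
    using module.sim_blockm_diag[OF module_N] nc_ext_sim[OF X1 ST1] nc_ext_sim[OF X2 ST2] A_eq B_eq
    by (simp add: dsum_eq_blockm)
  finally show "ft (p + q) (dsum p A q B) = dsum p (ft p A) q (ft q B)" .
qed

text \<open>Conjugating \<open>A \<oplus> B\<close> by the shear \<open>[I S; 0 I]\<close> produces \<open>A S - S B\<close> in the corner; when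
  this vanishes, the same conjugation fixes \<open>f(A) \<oplus> f(B)\<close>, forcing \<open>f(A) S = S f(B)\<close>.\<close>

lemma nc_ext_intertwine:
  assumes A: "\<Omega>t p A" and B: "\<Omega>t q B" and S: "mat_on p q S"
    and AS_SB: "ract scM p A S = lact scM q S B"
  shows "ract scN p (ft p A) S = lact scN q S (ft q B)"
proof -
  let ?P = "blockm p q (idm p) (- S) (idm q)" and ?Q = "blockm p q (idm p) S (idm q)"
  define W where "W = blockm p q A 0 B"
  have W: "\<Omega>t (p + q) W" "ft (p + q) W = blockm p q (ft p A) 0 (ft q B)"
    using nc_sim_closure_dsum[OF A B] by (simp_all add: W_def dsum_eq_blockm)
  have "sim scM (p + q) ?P W ?Q = W"
    using module.sim_shear[OF module_M nc_sim_closure_mat_on[OF A] nc_sim_closure_mat_on[OF B] S]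
      AS_SB by (simp add: W_def)
  then have "ft (p + q) W = sim scN (p + q) ?P (ft (p + q) W) ?Q"
    using nc_ext_sim_closure[OF W(1) inv_pair_shear[OF S]] by simp
  also have "\<dots> = blockm p q (ft p A) (ract scN p (ft p A) S - lact scN q S (ft q B)) (ft q B)"
    using module.sim_shear[OF module_N nc_ext_mat_on[OF A] nc_ext_mat_on[OF B] S] W(2) by simp
  finally have fixed: "blockm p q (ft p A) 0 (ft q B) =
      blockm p q (ft p A) (ract scN p (ft p A) S - lact scN q S (ft q B)) (ft q B)"
    using W(2) by simp
  have "mat_on p q (ract scN p (ft p A) S - lact scN q S (ft q B))"
    using module.ract_mat_on[OF module_N nc_ext_mat_on[OF A] S]
      module.lact_mat_on[OF module_N S nc_ext_mat_on[OF B]]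
    by (simp add: mat_on_def)
  then have "0 = ract scN p (ft p A) S - lact scN q S (ft q B)"
    using blockm_upper_eq[OF fixed] by (simp add: mat_on_def)
  then show ?thesis by simp
qed

text \<open>Right admissibility only provides \<open>[W r(T Z); 0 X] \<in> \<Omega>\<close>; conjugation by
  \<open>diag(S, r I)\<close> turns it into \<open>[S W T, Z; 0 X]\<close>.\<close>

lemma nc_sim_closure_blockm:
  assumes B: "\<Omega>t m B" and X: "(n, X) \<in> \<Omega>" and Z: "mat_on m n Z"
  shows "\<Omega>t (m + n) (blockm m n B Z X)"
proof -
  obtain W S T where W: "(m, W) \<in> \<Omega>" and ST: "inv_pair m S T" and B_eq: "B = sim scM m S W T"
    using B unfolding nc_sim_closure_def by blast
  have TZ: "mat_on m n (lact scM m T Z)"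
    using module.lact_mat_on[OF module_M _ Z] ST by (simp add: inv_pair_def)
  obtain r s where rs: "r * s = 1"
    and WX: "(m + n, blockm m n W (smat scM r (lact scM m T Z)) X) \<in> \<Omega>"
    using Omega_blockm_admissible[OF W X TZ] by blast
  have "inv_pair (m + n) (blockm m n S 0 (smat (*) r (idm n))) (blockm m n T 0 (smat (*) s (idm n)))"
    using inv_pair_blockm_diag[OF ST inv_pair_scalar_idm[OF rs]] .
  moreover have "sim scM (m + n) (blockm m n S 0 (smat (*) r (idm n)))
      (blockm m n W (smat scM r (lact scM m T Z)) X) (blockm m n T 0 (smat (*) s (idm n)))
    = blockm m n B Z X"
    using module.sim_blockm_rescale[OF module_M Omega_mat_on[OF X] Z _ rs] ST B_eq
    by (simp add: inv_pair_def)
  ultimately show ?thesis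
    using WX unfolding nc_sim_closure_def by (metis (no_types))
qed

end


section \<open>Block bidiagonal matrices with blocks of equal size\<close>

definition bidiag_uniform ::
  "nat \<Rightarrow> nat \<Rightarrow> (nat \<Rightarrow> ('a::zero) mat) \<Rightarrow> (nat \<Rightarrow> 'a mat) \<Rightarrow> 'a mat" where
  "bidiag_uniform n L Xf Zf = (\<lambda>i j. if i < Suc L * n \<and> j < Suc L * n then
     (if i div n = j div n then Xf (i div n) (i mod n) (j mod n)
      else if j div n = Suc (i div n) then Zf (i div n) (i mod n) (j mod n) else 0) else 0)"

lemma block_less_iff: "a < (n::nat) \<Longrightarrow> p * n + a < k * n \<longleftrightarrow> p < k"
proof
  assume "a < n" "p * n + a < k * n"
  then have "p * n < k * n" by linarith
  then show "p < k" by (simp add: mult_less_cancel2)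
next
  assume "a < n" "p < k"
  then have "Suc p * n \<le> k * n" by (simp add: mult_le_cancel2 del: mult_Suc)
  then show "p * n + a < k * n" using \<open>a < n\<close> by simp
qed

lemma block_le_iff: "a < (n::nat) \<Longrightarrow> k * n \<le> p * n + a \<longleftrightarrow> k \<le> p"
  using block_less_iff[of a n p k] by linarith

lemma mat_eq_blockwise:
  fixes M M' :: "'a mat"
  assumes n: "0 < n"
    and eq: "\<And>p a q b. a < n \<Longrightarrow> b < n \<Longrightarrow> M (p * n + a) (q * n + b) = M' (p * n + a) (q * n + b)"
  shows "M = M'"
proof (intro ext)
  fix i j
  have "i = i div n * n + i mod n" "j = j div n * n + j mod n" by simp_all
  then show "M i j = M' i j" using eq n by (metis mod_less_divisor)
qed

lemma bidiag_uniform_entry: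
  assumes ab: "a < n" "b < n"
  shows "bidiag_uniform n L Xf Zf (p * n + a) (q * n + b) =
    (if p \<le> L \<and> q \<le> L then (if p = q then Xf p a b else if q = Suc p then Zf p a b else 0) else 0)"
proof -
  have "(p * n + a) div n = p" "(p * n + a) mod n = a" "(q * n + b) div n = q" "(q * n + b) mod n = b"
    using ab by simp_all
  moreover have "p * n + a < Suc L * n \<longleftrightarrow> p \<le> L" "q * n + b < Suc L * n \<longleftrightarrow> q \<le> L"
    by (simp_all only: block_less_iff[OF ab(1)] block_less_iff[OF ab(2)] less_Suc_eq_le)
  ultimately show ?thesis
    unfolding bidiag_uniform_def by (simp only:)
qed

lemma bidiag_uniform_cong:
  "0 < n \<Longrightarrow> (\<And>p. p \<le> L \<Longrightarrow> Xf p = Xf' p) \<Longrightarrow> (\<And>p. p < L \<Longrightarrow> Zf p = Zf' p) \<Longrightarrow>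
   bidiag_uniform n L Xf Zf = bidiag_uniform n L Xf' Zf'"
  by (rule mat_eq_blockwise) (auto simp: bidiag_uniform_entry)

lemma bidiag_uniform_0:
  assumes n: "0 < n" and X: "mat_on n n (Xf 0)"
  shows "bidiag_uniform n 0 Xf Zf = Xf 0"
proof (rule mat_eq_blockwise[OF n])
  fix p a q b assume "a < n" "b < n"
  moreover have "n \<le> p * n + a" if "0 < p" for p a using that by (cases p) auto
  ultimately show "bidiag_uniform n 0 Xf Zf (p * n + a) (q * n + b) = Xf 0 (p * n + a) (q * n + b)"
    using X by (auto simp: bidiag_uniform_entry mat_on_def)
qed

lemma blockm_block_entry:
  assumes ab: "a < n" "b < n"
  shows "blockm (K * n) n M Z X (p * n + a) (q * n + b) =
    (if p < K \<and> q < K then M (p * n + a) (q * n + b)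
     else if p < K \<and> q = K then Z (p * n + a) b
     else if p = K \<and> q = K then X a b else 0)"
proof -
  have "p * n + a < K * n \<longleftrightarrow> p < K" "q * n + b < K * n \<longleftrightarrow> q < K"
    "K * n \<le> p * n + a \<longleftrightarrow> K \<le> p" "K * n \<le> q * n + b \<longleftrightarrow> K \<le> q"
    by (simp_all only: block_less_iff[OF ab(1)] block_less_iff[OF ab(2)]
        block_le_iff[OF ab(1)] block_le_iff[OF ab(2)])
  moreover have "p * n + a < K * n + n \<longleftrightarrow> p \<le> K" "q * n + b < K * n + n \<longleftrightarrow> q \<le> K"
    using block_less_iff[OF ab(1), of p "Suc K"] block_less_iff[OF ab(2), of q "Suc K"]
    by (simp_all add: add.commute less_Suc_eq_le)
  ultimately show ?thesis
    unfolding blockm_def using ab by auto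
qed

lemma bidiag_uniform_Suc:
  assumes n: "0 < n"
  shows "bidiag_uniform n (Suc L) Xf Zf = blockm (Suc L * n) n (bidiag_uniform n L Xf Zf)
    (\<lambda>i j. if L * n \<le> i \<and> i < Suc L * n \<and> j < n then Zf L (i - L * n) j else 0) (Xf (Suc L))"
proof (rule mat_eq_blockwise[OF n])
  fix p a q b assume ab: "a < n" "b < n"
  have last_block: "L * n \<le> p * n + a \<and> p * n + a < Suc L * n \<longleftrightarrow> p = L"
    unfolding block_le_iff[OF ab(1)] block_less_iff[OF ab(1)] by arith
  show "bidiag_uniform n (Suc L) Xf Zf (p * n + a) (q * n + b) = blockm (Suc L * n) n
      (bidiag_uniform n L Xf Zf)
      (\<lambda>i j. if L * n \<le> i \<and> i < Suc L * n \<and> j < n then Zf L (i - L * n) j else 0) (Xf (Suc L))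
      (p * n + a) (q * n + b)"
    unfolding blockm_block_entry[OF ab] bidiag_uniform_entry[OF ab]
    using ab by (auto simp: last_block simp del: mult_Suc)
qed


definition first_row_block :: "nat \<Rightarrow> ('a::zero) mat \<Rightarrow> nat \<Rightarrow> 'a mat" where
  "first_row_block n M L = (\<lambda>i j. if i < n \<and> j < n then M i (j + L * n) else 0)"

lemma boff_replicate: "boff (replicate m n) k = min k m * n"
  by (simp add: boff_def sum_list_replicate)

lemma bidx_replicate:
  assumes "0 < n" "i < m * n"
  shows "bidx (replicate m n) i = i div n"
  unfolding bidx_def boff_replicate
proof (rule Least_equality)
  have "i div n < m" using assms by (simp add: less_mult_imp_div_less)
  then show "i < min (Suc (i div n)) m * n"
    using assms by (simp add: min_def) (metis dividend_less_div_times)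
next
  fix y assume "i < min (Suc y) m * n"
  then have "i < Suc y * n"
    by (metis min_def mult_le_cancel2 linorder_not_le order.strict_trans2 nat_le_linear)
  then show "i div n \<le> y"
    using assms by (simp add: less_Suc_eq_le less_mult_imp_div_less flip: less_Suc_eq_le)
qed

lemma bidiag_replicate:
  assumes n: "0 < n"
  shows "bidiag (replicate (Suc L) n) Xs Zs = bidiag_uniform n L (\<lambda>p. Xs ! p) (\<lambda>p. Zs ! p)"
proof (intro ext)
  fix i j
  show "bidiag (replicate (Suc L) n) Xs Zs i j = bidiag_uniform n L (\<lambda>p. Xs ! p) (\<lambda>p. Zs ! p) i j"
  proof (cases "i < Suc L * n \<and> j < Suc L * n")
    case True
    have "i div n \<le> L" "j div n \<le> L"
      using True by (metis less_mult_imp_div_less less_Suc_eq_le)+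
    then have "boff (replicate (Suc L) n) (i div n) = i div n * n"
      "boff (replicate (Suc L) n) (j div n) = j div n * n"
      by (simp_all add: boff_replicate min_def del: replicate_Suc)
    moreover have "i - i div n * n = i mod n" "j - j div n * n = j mod n"
      by (simp_all add: minus_div_mult_eq_mod)
    moreover have "bidx (replicate (Suc L) n) i = i div n" "bidx (replicate (Suc L) n) j = j div n"
      using bidx_replicate[OF n, of i "Suc L"] bidx_replicate[OF n, of j "Suc L"] True
      by (simp_all del: replicate_Suc)
    moreover have "sum_list (replicate (Suc L) n) = Suc L * n"
      by (simp only: sum_list_replicate) simp
    ultimately show ?thesis
      using True unfolding bidiag_def bidiag_uniform_def Let_def by (auto simp del: replicate_Suc)
  next
    case False
    then show ?thesis by (auto simp: bidiag_def bidiag_uniform_def sum_list_replicate)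
  qed
qed

lemma Delta_replicate:
  assumes n: "0 < n"
  shows "Delta scM scN \<Omega> f (replicate (Suc L) n) Xs Zs
     = first_row_block n (nc_ext scM scN \<Omega> f (Suc L * n)
         (bidiag_uniform n L (\<lambda>p. Xs ! p) (\<lambda>p. Zs ! p))) L"
proof -
  have e: "length (replicate (Suc L) n) - 1 = L" "replicate (Suc L) n ! 0 = n"
    "replicate (Suc L) n ! L = n" "boff (replicate (Suc L) n) 0 = 0"
    "boff (replicate (Suc L) n) L = L * n" "sum_list (replicate (Suc L) n) = Suc L * n"
    by (simp_all only: boff_replicate length_replicate nth_replicate sum_list_replicate) simp_all
  show ?thesis
    unfolding Delta_def first_row_block_def Let_def e bidiag_replicate[OF n] add_0_right ..
qed

text \<open>\<open>idm (Suc N * n) + last_block_down n N\<close> is the \<open>(N + 2) \<times> (N + 1)\<close> block matrix that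
  stacks the identity on top of a block row \<open>[0 \<dots> 0 I]\<close>.\<close>

definition last_block_down :: "nat \<Rightarrow> nat \<Rightarrow> ('r::comm_ring_1) mat" where
  "last_block_down n N = (\<lambda>k j. if k = j + n \<and> N * n \<le> j \<and> j < Suc N * n then 1 else 0)"

definition bidiag_const :: "nat \<Rightarrow> ('a::zero) mat \<Rightarrow> 'a mat \<Rightarrow> nat \<Rightarrow> 'a mat" where
  "bidiag_const n Y Z L = bidiag_uniform n L (\<lambda>_. Y) (\<lambda>_. Z)"

definition bidiag_last :: "nat \<Rightarrow> ('a::zero) mat \<Rightarrow> 'a mat \<Rightarrow> 'a mat \<Rightarrow> nat \<Rightarrow> 'a mat" where
  "bidiag_last n Y X Z L = bidiag_uniform n L (\<lambda>p. if p < L then Y else X) (\<lambda>_. Z)"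

context module
begin

lemma ract_last_block_down:
  "Suc N * n + n \<le> p \<Longrightarrow> ract scale p G (last_block_down n N) i j =
    (if N * n \<le> j \<and> j < Suc N * n then G i (j + n) else 0)"
  unfolding ract_def last_block_down_def scale_if_zero by (simp add: sum_lessThan_if_eq)

lemma lact_last_block_down:
  "lact scale (Suc N * n) (last_block_down n N) G i j =
    (if n \<le> i \<and> N * n \<le> i - n \<and> i - n < Suc N * n then G (i - n) j else 0)"
proof -
  have "lact scale (Suc N * n) (last_block_down n N) G i j =
      (\<Sum>k<Suc N * n. if k = i - n \<and> (n \<le> i \<and> N * n \<le> i - n \<and> i - n < Suc N * n) then G k j else 0)"
    unfolding lact_def last_block_down_def scale_if_zero by (rule sum.cong) auto
  then show ?thesis by (simp add: sum_lessThan_if_eq)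
qed

lemma bidiag_last_intertwine_Suc:
  assumes n: "0 < n"
  shows "ract scale (Suc (Suc N) * n) (bidiag_last n Y X (X - Y) (Suc N))
           (idm (Suc N * n) + last_block_down n N)
       = lact scale (Suc N * n) (idm (Suc N * n) + last_block_down n N) (bidiag_last n Y X (X - Y) N)"
proof (rule mat_eq_blockwise[OF n])
  fix P a Q b assume ab: "a < n" "b < n"
  have le: "Suc N * n \<le> Suc (Suc N) * n" "Suc N * n + n \<le> Suc (Suc N) * n" by simp_all
  have shift: "Q * n + b + n = Suc Q * n + b" by simp
  note blocks = block_less_iff[OF ab(1)] block_less_iff[OF ab(2)] block_le_iff[OF ab(1)]
    block_le_iff[OF ab(2)]
  show "ract scale (Suc (Suc N) * n) (bidiag_last n Y X (X - Y) (Suc N))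
      (idm (Suc N * n) + last_block_down n N) (P * n + a) (Q * n + b)
    = lact scale (Suc N * n) (idm (Suc N * n) + last_block_down n N)
      (bidiag_last n Y X (X - Y) N) (P * n + a) (Q * n + b)"
  proof (cases P)
    case 0
    then show ?thesis using ab
      by (simp only: ract_add_right lact_add_left plus_fun_apply ract_idm_apply[OF le(1)]
          ract_last_block_down[OF le(2)] lact_idm_apply lact_last_block_down blocks shift
          bidiag_last_def bidiag_uniform_entry) auto
  next
    case (Suc P')
    have "Suc P' * n + a - n = P' * n + a" "n \<le> Suc P' * n + a" by simp_all
    then show ?thesis using ab Suc
      by (simp only: ract_add_right lact_add_left plus_fun_apply ract_idm_apply[OF le(1)]
          ract_last_block_down[OF le(2)] lact_idm_apply lact_last_block_down blocks shift
          bidiag_last_def bidiag_uniform_entry simp_thms if_True) auto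
  qed
qed

lemma bidiag_last_intertwine_const:
  assumes n: "0 < n"
  shows "ract scale (Suc (Suc N) * n) (bidiag_last n Y X Z (Suc N)) (idm (Suc N * n))
       = lact scale (Suc N * n) (idm (Suc N * n)) (bidiag_const n Y Z N)"
proof (rule mat_eq_blockwise[OF n])
  fix P a Q b assume ab: "a < n" "b < n"
  have le: "Suc N * n \<le> Suc (Suc N) * n" by simp
  show "ract scale (Suc (Suc N) * n) (bidiag_last n Y X Z (Suc N)) (idm (Suc N * n)) (P * n + a) (Q * n + b)
      = lact scale (Suc N * n) (idm (Suc N * n)) (bidiag_const n Y Z N) (P * n + a) (Q * n + b)"
    using ab by (simp only: ract_idm_apply[OF le] lact_idm_apply block_less_iff[OF ab(1)]
        block_less_iff[OF ab(2)] bidiag_const_def bidiag_last_def bidiag_uniform_entry) auto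
qed

end

context nc_function
begin

lemma nc_sim_closure_bidiag_uniform:
  "(\<And>p. p \<le> L \<Longrightarrow> (n, Xf p) \<in> \<Omega>) \<Longrightarrow> (\<And>p. p < L \<Longrightarrow> mat_on n n (Zf p)) \<Longrightarrow>
   \<Omega>t (Suc L * n) (bidiag_uniform n L Xf Zf)"
proof (induction L)
  case 0
  then have X: "(n, Xf 0) \<in> \<Omega>" by simp
  then show ?case
    using bidiag_uniform_0[OF Omega_dim_pos Omega_mat_on] nc_sim_closure_Omega by simp
next
  case (Suc L)
  have X: "(n, Xf (Suc L)) \<in> \<Omega>" using Suc.prems by simp
  have IH: "\<Omega>t (Suc L * n) (bidiag_uniform n L Xf Zf)" using Suc by simp
  have Z: "mat_on (Suc L * n) n
      (\<lambda>i j. if L * n \<le> i \<and> i < Suc L * n \<and> j < n then Zf L (i - L * n) j else 0)"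
    by (simp add: mat_on_def)
  have "Suc (Suc L) * n = Suc L * n + n" by simp
  then show ?case
    unfolding bidiag_uniform_Suc[OF Omega_dim_pos[OF X]]
    using nc_sim_closure_blockm[OF IH X Z] by (simp only:)
qed

lemma nc_sim_closure_bidiag_last:
  "(n, X) \<in> \<Omega> \<Longrightarrow> (n, Y) \<in> \<Omega> \<Longrightarrow> \<Omega>t (Suc L * n) (bidiag_last n Y X (X - Y) L)"
  unfolding bidiag_last_def
  by (rule nc_sim_closure_bidiag_uniform) (auto simp: mat_on_def dest!: Omega_mat_on)

lemma nc_sim_closure_bidiag_const:
  "(n, X) \<in> \<Omega> \<Longrightarrow> (n, Y) \<in> \<Omega> \<Longrightarrow> \<Omega>t (Suc L * n) (bidiag_const n Y (X - Y) L)"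
  unfolding bidiag_const_def
  by (rule nc_sim_closure_bidiag_uniform) (auto simp: mat_on_def dest!: Omega_mat_on)

end


section \<open>Telescoping\<close>

context nc_function
begin

lemma nc_ext_bidiag_last_Suc_entry:
  assumes X: "(n, X) \<in> \<Omega>" and Y: "(n, Y) \<in> \<Omega>" and ij: "i < n" "j < n"
  shows "ft (Suc N * n) (bidiag_last n Y X (X - Y) N) i (j + N * n) =
    ft (Suc (Suc N) * n) (bidiag_last n Y X (X - Y) (Suc N)) i (j + N * n) +
    ft (Suc (Suc N) * n) (bidiag_last n Y X (X - Y) (Suc N)) i (j + Suc N * n)"
proof -
  let ?p = "Suc (Suc N) * n" and ?q = "Suc N * n" and ?S = "idm (Suc N * n) + last_block_down n N"
  let ?FC = "ft ?p (bidiag_last n Y X (X - Y) (Suc N))" and ?FB = "ft ?q (bidiag_last n Y X (X - Y) N)"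
  have le: "?q \<le> ?p" "?q + n \<le> ?p" by simp_all
  have S: "mat_on ?p ?q ?S" by (auto simp: mat_on_def idm_def last_block_down_def)
  have "ract scN ?p ?FC ?S = lact scN ?q ?S ?FB"
    using nc_ext_intertwine[OF nc_sim_closure_bidiag_last[OF X Y] nc_sim_closure_bidiag_last[OF X Y] S
        module.bidiag_last_intertwine_Suc[OF module_M Omega_dim_pos[OF X]]] .
  then have "ract scN ?p ?FC ?S i (j + N * n) = lact scN ?q ?S ?FB i (j + N * n)" by simp
  moreover have "j + N * n < ?q" "\<not> n \<le> i" "i < ?q" using ij by simp_all
  ultimately have "?FC i (j + N * n) + ?FC i (j + N * n + n) = ?FB i (j + N * n)"
    by (simp only: module.ract_add_right[OF module_N] module.lact_add_left[OF module_N]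
        plus_fun_apply module.ract_idm_apply[OF module_N le(1)]
        module.ract_last_block_down[OF module_N le(2)] module.lact_idm_apply[OF module_N]
        module.lact_last_block_down[OF module_N] if_True if_False simp_thms) simp
  moreover have "j + N * n + n = j + Suc N * n" by simp
  ultimately show ?thesis by simp
qed

lemma nc_ext_bidiag_last_Suc_eq_const:
  assumes X: "(n, X) \<in> \<Omega>" and Y: "(n, Y) \<in> \<Omega>" and ij: "i < n" "j < n"
  shows "ft (Suc (Suc N) * n) (bidiag_last n Y X (X - Y) (Suc N)) i (j + N * n) =
    ft (Suc N * n) (bidiag_const n Y (X - Y) N) i (j + N * n)"
proof -
  let ?p = "Suc (Suc N) * n" and ?q = "Suc N * n"
  have le: "?q \<le> ?p" by simp
  have "mat_on ?p ?q (idm ?q)" by (auto simp: mat_on_def idm_def)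
  then have "ract scN ?p (ft ?p (bidiag_last n Y X (X - Y) (Suc N))) (idm ?q) =
      lact scN ?q (idm ?q) (ft ?q (bidiag_const n Y (X - Y) N))"
    using nc_ext_intertwine[OF nc_sim_closure_bidiag_last[OF X Y] nc_sim_closure_bidiag_const[OF X Y]
        _ module.bidiag_last_intertwine_const[OF module_M Omega_dim_pos[OF X]]] by blast
  then have "ract scN ?p (ft ?p (bidiag_last n Y X (X - Y) (Suc N))) (idm ?q) i (j + N * n) =
      lact scN ?q (idm ?q) (ft ?q (bidiag_const n Y (X - Y) N)) i (j + N * n)" by simp
  moreover have "i < ?q" "j + N * n < ?q" using ij by simp_all
  ultimately show ?thesis
    by (simp only: module.ract_idm_apply[OF module_N le] module.lact_idm_apply[OF module_N] if_True)
qed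

lemma first_row_block_bidiag_last_Suc:
  assumes X: "(n, X) \<in> \<Omega>" and Y: "(n, Y) \<in> \<Omega>"
  shows "first_row_block n (ft (Suc N * n) (bidiag_last n Y X (X - Y) N)) N =
    first_row_block n (ft (Suc N * n) (bidiag_const n Y (X - Y) N)) N +
    first_row_block n (ft (Suc (Suc N) * n) (bidiag_last n Y X (X - Y) (Suc N))) (Suc N)"
  using nc_ext_bidiag_last_Suc_entry[OF X Y] nc_ext_bidiag_last_Suc_eq_const[OF X Y]
  by (simp add: fun_eq_iff first_row_block_def)

lemma taylor_first_row_block:
  assumes X: "(n, X) \<in> \<Omega>" and Y: "(n, Y) \<in> \<Omega>"
  shows "f n X = (\<Sum>l<N. first_row_block n (ft (Suc l * n) (bidiag_const n Y (X - Y) l)) l)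
    + first_row_block n (ft (Suc N * n) (bidiag_last n Y X (X - Y) N)) N"
proof (induction N)
  case 0
  have "bidiag_last n Y X (X - Y) 0 = X"
    unfolding bidiag_last_def
    using bidiag_uniform_0[OF Omega_dim_pos[OF X], of "\<lambda>_. X"] Omega_mat_on[OF X] by simp
  then have "ft (Suc 0 * n) (bidiag_last n Y X (X - Y) 0) = f n X"
    using nc_ext_Omega[OF X] by simp
  then have "first_row_block n (ft (Suc 0 * n) (bidiag_last n Y X (X - Y) 0)) 0 = f n X"
    using f_mat_on[OF X] by (auto simp: first_row_block_def mat_on_def fun_eq_iff)
  then show ?case by (simp only: lessThan_0 sum.empty add_0_left)
next
  case (Suc N)
  then show ?case
    by (simp only: first_row_block_bidiag_last_Suc[OF X Y, of N] sum.lessThan_Suc add.assoc)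
qed

end

theorem theorem4p1:
  fixes scM :: "'r::comm_ring_1 \<Rightarrow> 'm::ab_group_add \<Rightarrow> 'm"
    and scN :: "'r \<Rightarrow> 'n::ab_group_add \<Rightarrow> 'n"
    and \<Omega> :: "(nat \<times> 'm mat) set"
    and f :: "nat \<Rightarrow> 'm mat \<Rightarrow> 'n mat"
    and n N :: nat and X Y :: "'m mat"
  assumes "module scM" and "module scN"
    and "nc_set \<Omega>" and "right_admissible scM \<Omega>"
    and "nc_fun scM scN \<Omega> f"
    and "(n, Y) \<in> \<Omega>" and "(n, X) \<in> \<Omega>"
  shows "f n X =
    (\<Sum>l\<le>N. Delta scM scN \<Omega> f (replicate (Suc l) n) (replicate (Suc l) Y) (replicate l (X - Y)))
    + Delta scM scN \<Omega> f (replicate (N + 2) n) (replicate (Suc N) Y @ [X]) (replicate (Suc N) (X - Y))"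
proof -
  interpret nc_function scM scN \<Omega> f
    using assms(1-5) by (simp add: nc_function_def)
  have n: "0 < n" using Omega_dim_pos[OF assms(7)] .
  have "Delta scM scN \<Omega> f (replicate (Suc l) n) (replicate (Suc l) Y) (replicate l (X - Y))
      = first_row_block n (ft (Suc l * n) (bidiag_const n Y (X - Y) l)) l" for l
    unfolding Delta_replicate[OF n] bidiag_const_def
    by (subst bidiag_uniform_cong[OF n]) (auto simp del: replicate_Suc)
  moreover have "Delta scM scN \<Omega> f (replicate (N + 2) n) (replicate (Suc N) Y @ [X])
      (replicate (Suc N) (X - Y))
    = first_row_block n (ft (Suc (Suc N) * n) (bidiag_last n Y X (X - Y) (Suc N))) (Suc N)"
    unfolding numeral_2_eq_2 add_Suc_right add_0_right Delta_replicate[OF n] bidiag_last_def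
    by (subst bidiag_uniform_cong[OF n]) (auto simp: nth_append simp del: replicate_Suc)
  ultimately show ?thesis
    using taylor_first_row_block[OF assms(7,6), of "Suc N"] by (simp add: lessThan_Suc_atMost)
qed

end
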